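(* Let $A$ be a real symmetric $n\times n$ matrix, $T\in\{1,\dots,n\}$, $u>\lambda_{\max}(A)$, $\delta_U>0$, $t>0$, and $Y=vv^T$ with $v\in\mathbb{R}^n$. Define $$U_A=\frac{((u+\delta_U)I-A)^{-2}}{\Phi^u(A)-\Phi^{u+\delta_U}(A)}+((u+\delta_U)I-A)^{-1}.$$ If $U_A\bullet Y\le 1/t$, then $\Phi^{u+\delta_U}(A+tY)\le\Phi^u(A)$ and $\lambda_{\max}(A+tY)<u+\delta_U$.
   Context: Eigenvalues $\lambda_1\le\dots\le\lambda_n$ are in increasing order. For a symmetric matrix $B$ and $u>\lambda_{\max}(B)$, the upper potential is $\Phi^u(B)=\sum_{i=n-T+1}^n\frac{1}{u-\lambda_i(B)}$ (sum over the $T$ largest eigenvalues). $C\bullet D=\operatorname{Tr}(C^TD)$ is the Frobenius product. *)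

theory Defs
  imports "Jordan_Normal_Form.Jordan_Normal_Form" "HOL-Library.Multiset"
begin

(* The list is 0-indexed: eigs B ! (i-1) = lambda_i. *)
definition eigs :: "real mat \<Rightarrow> real list" where
  "eigs B = sorted_list_of_multiset (proots (char_poly B))"

definition lambda_max :: "real mat \<Rightarrow> real" where
  "lambda_max B = last (eigs B)"

definition upper_potential :: "nat \<Rightarrow> real \<Rightarrow> real mat \<Rightarrow> real" where
  "upper_potential T u B =
     (\<Sum>i\<in>{dim_row B - T..<dim_row B}. 1 / (u - eigs B ! i))"

definition frob :: "real mat \<Rightarrow> real mat \<Rightarrow> real" where
  "frob C D = (\<Sum>i<dim_row C. \<Sum>j<dim_col C. C $$ (i,j) * D $$ (i,j))"

definition minv :: "real mat \<Rightarrow> real mat" where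
  "minv M = the (mat_inverse M)"

end

theory Submission
  imports Defs
begin

text \<open>Write u' = u + \<delta>U, R = (u' I - A)^-1 and B = A + t v v^T. In an orthonormal eigenbasis
  of A the hypothesis frob U_A Y <= 1/t reads
  v^T R^2 v / (Phi^u(A) - Phi^u'(A)) + v^T R v <= 1/t. In particular t v^T R v < 1, which by a
  weighted Cauchy-Schwarz argument makes u' I - B positive definite, so lambda_max(B) < u'.
  Sherman-Morrison gives tr (u' I - B)^-1 = tr R + t v^T R^2 v / (1 - t v^T R v), and the
  hypothesis bounds this increase of the full potential by Phi^u(A) - Phi^u'(A). Since B - A is
  positive semidefinite, lambda_i(A) <= lambda_i(B) for all i, so the terms of the n - T smallest
  eigenvalues can only grow and the top-T part Phi^u'(B) grows by at most the same amount.\<close>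

section \<open>Orthonormal vectors and matrices\<close>

definition orthonormal :: "nat \<Rightarrow> real vec list \<Rightarrow> bool" where
  "orthonormal n vs \<longleftrightarrow> set vs \<subseteq> carrier_vec n \<and> distinct vs \<and>
     (\<forall>x\<in>set vs. \<forall>y\<in>set vs. x \<bullet> y = (if x = y then 1 else 0))"

lemma orthonormal_append:
  "orthonormal n (xs @ ys) \<longleftrightarrow>
     orthonormal n xs \<and> orthonormal n ys \<and> (\<forall>x\<in>set xs. \<forall>y\<in>set ys. x \<bullet> y = 0)"
proof
  assume "orthonormal n (xs @ ys)"
  then show "orthonormal n xs \<and> orthonormal n ys \<and> (\<forall>x\<in>set xs. \<forall>y\<in>set ys. x \<bullet> y = 0)"
    unfolding orthonormal_def by (auto dest: disjoint_iff[THEN iffD1])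
next
  assume *: "orthonormal n xs \<and> orthonormal n ys \<and> (\<forall>x\<in>set xs. \<forall>y\<in>set ys. x \<bullet> y = 0)"
  then have "y \<bullet> x = 0" if "x \<in> set xs" "y \<in> set ys" for x y
    using that comm_scalar_prod unfolding orthonormal_def by (metis subsetD)
  moreover have "set xs \<inter> set ys = {}"
    using * unfolding orthonormal_def by fastforce
  ultimately show "orthonormal n (xs @ ys)"
    using * unfolding orthonormal_def by auto
qed

lemma scalar_prod_self_pos:
  fixes z :: "real vec"
  assumes "z \<in> carrier_vec n" and "z \<noteq> 0\<^sub>v n"
  shows "z \<bullet> z > 0"
proof -
  obtain i where i: "i < n" "z $ i \<noteq> 0"
    using assms by (metis eq_vecI index_zero_vec(1,2) carrier_vecD)
  have "(z $ i)\<^sup>2 \<le> (\<Sum>k<n. (z $ k)\<^sup>2)" by (rule member_le_sum) (use i in auto)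
  also have "\<dots> = z \<bullet> z"
    using assms by (auto simp: scalar_prod_def power2_eq_square lessThan_atLeast0)
  finally show ?thesis using i by (smt (verit) zero_less_power2)
qed

lemma orthonormal_snoc:
  assumes "orthonormal n qs" and z: "z \<in> carrier_vec n" "z \<noteq> 0\<^sub>v n"
    and "\<forall>q\<in>set qs. q \<bullet> z = 0"
  shows "orthonormal n (qs @ [(1 / sqrt (z \<bullet> z)) \<cdot>\<^sub>v z])"
proof -
  have "z \<bullet> z > 0" using scalar_prod_self_pos[OF z] .
  then show ?thesis
    using assms unfolding orthonormal_append
    by (auto simp: orthonormal_def scalar_prod_smult_distrib[of _ n] smult_scalar_prod_distrib
        real_sqrt_mult[symmetric] simp del: real_sqrt_mult)
qed

lemma exists_nonzero_orthogonal_vec: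
  fixes cs :: "real vec list"
  assumes cs: "set cs \<subseteq> carrier_vec n" and len: "length cs < n"
  shows "\<exists>z\<in>carrier_vec n. z \<noteq> 0\<^sub>v n \<and> (\<forall>c\<in>set cs. c \<bullet> z = 0)"
proof -
  define c where "c = (\<lambda>i. if i < length cs then cs ! i else 0\<^sub>v n)"
  define M where "M = mat\<^sub>r n n (\<lambda>i. if i = n - 1 then 0\<^sub>v n else c i)"
  have M: "M \<in> carrier_mat n n" unfolding M_def by auto
  have c: "c \<in> {0..<n} \<rightarrow> carrier_vec n" using cs nth_mem unfolding c_def by fastforce
  have "det M = 0" unfolding M_def by (rule det_row_0[OF _ c]) (use len in auto)
  then obtain z where z: "z \<in> carrier_vec n" "z \<noteq> 0\<^sub>v n" "M *\<^sub>v z = 0\<^sub>v n"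
    using det_0_iff_vec_prod_zero_field[OF M] by auto
  have "cs ! i \<bullet> z = 0" if i: "i < length cs" for i
  proof -
    have "row M i = cs ! i"
      using i len cs nth_mem unfolding M_def c_def by (subst row_mat_of_row_fun) fastforce+
    then show ?thesis
      using z(3) i len M by (metis carrier_matD(1) index_mult_mat_vec index_zero_vec(1) less_trans)
  qed
  then show ?thesis using z by (metis in_set_conv_nth)
qed

lemma orthonormal_extend:
  assumes "orthonormal n qs" and "length qs \<le> n"
  shows "\<exists>rs. orthonormal n (qs @ rs) \<and> length (qs @ rs) = n"
  using assms
proof (induction "n - length qs" arbitrary: qs)
  case 0
  then show ?case by (intro exI[of _ "[]"]) auto
next
  case (Suc d)
  then have "length qs < n" and "set qs \<subseteq> carrier_vec n" unfolding orthonormal_def by auto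
  then obtain z where "z \<in> carrier_vec n" "z \<noteq> 0\<^sub>v n" "\<forall>q\<in>set qs. q \<bullet> z = 0"
    using exists_nonzero_orthogonal_vec by blast
  with Suc.prems obtain q where "orthonormal n (qs @ [q])"
    using orthonormal_snoc by blast
  with Suc obtain rs where "orthonormal n (qs @ [q] @ rs) \<and> length (qs @ [q] @ rs) = n"
    by (metis Suc_diff_Suc Suc_le_eq \<open>length qs < n\<close> append_assoc diff_Suc_1
        length_append_singleton)
  then show ?case by (intro exI[of _ "q # rs"]) auto
qed

lemma orthonormal_mat_of_cols:
  assumes "orthonormal n vs"
  shows "transpose_mat (mat_of_cols n vs) * mat_of_cols n vs = 1\<^sub>m (length vs)"
proof (rule eq_matI)
  fix i j assume "i < dim_row (1\<^sub>m (length vs))" "j < dim_col (1\<^sub>m (length vs))"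
  with assms show "(transpose_mat (mat_of_cols n vs) * mat_of_cols n vs) $$ (i, j)
      = 1\<^sub>m (length vs) $$ (i, j)"
    unfolding orthonormal_def transpose_mat_of_cols
    by (auto simp: mat_of_rows_row col_mat_of_cols nth_eq_iff_index_eq subset_code(1))
qed auto

definition orthonormal_mat :: "nat \<Rightarrow> real mat \<Rightarrow> bool" where
  "orthonormal_mat n Q \<longleftrightarrow> Q \<in> carrier_mat n n \<and> transpose_mat Q * Q = 1\<^sub>m n"

lemma orthonormal_matD:
  assumes "orthonormal_mat n Q"
  shows "Q \<in> carrier_mat n n" "transpose_mat Q * Q = 1\<^sub>m n" "Q * transpose_mat Q = 1\<^sub>m n"
  using assms mat_mult_left_right_inverse[of "transpose_mat Q" n Q]
  unfolding orthonormal_mat_def by auto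

lemma orthonormal_mat_col:
  assumes "orthonormal_mat n Q" "k < n" "j < n"
  shows "col Q k \<bullet> col Q j = (if k = j then 1 else 0)"
proof -
  have "(transpose_mat Q * Q) $$ (k, j) = col Q k \<bullet> col Q j"
    using assms orthonormal_matD(1)[OF assms(1)] by (auto simp: row_transpose)
  then show ?thesis using assms orthonormal_matD(2) by simp
qed

lemma orthonormal_mat_of_cols_square:
  assumes "orthonormal n vs" "length vs = n"
  shows "orthonormal_mat n (mat_of_cols n vs)"
  unfolding orthonormal_mat_def using orthonormal_mat_of_cols[OF assms(1)] assms(2)
  by (metis mat_of_cols_carrier(1))

lemma orthonormal_basis_eqI:
  assumes bs: "orthonormal n bs" "length bs = n"
    and x: "x \<in> carrier_vec n" and y: "y \<in> carrier_vec n"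
    and eq: "\<And>b. b \<in> set bs \<Longrightarrow> b \<bullet> x = b \<bullet> y"
  shows "x = y"
proof -
  define W where "W = mat_of_cols n bs"
  have W: "W \<in> carrier_mat n n" and WWt: "W * transpose_mat W = 1\<^sub>m n"
    using orthonormal_matD[OF orthonormal_mat_of_cols_square[OF bs]] unfolding W_def by auto
  have "transpose_mat W *\<^sub>v x = transpose_mat W *\<^sub>v y"
  proof (rule eq_vecI)
    fix i assume "i < dim_vec (transpose_mat W *\<^sub>v y)"
    then have "i < n" using W by simp
    then show "(transpose_mat W *\<^sub>v x) $ i = (transpose_mat W *\<^sub>v y) $ i"
      using bs eq unfolding W_def transpose_mat_of_cols orthonormal_def
      by (auto simp: mat_of_rows_row subset_code(1))
  qed (use W in simp)
  then have "(W * transpose_mat W) *\<^sub>v x = (W * transpose_mat W) *\<^sub>v y"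
    using W x y by (simp add: assoc_mult_mat_vec[of _ n n _ n])
  then show ?thesis using WWt x y by simp
qed

section \<open>The spectral theorem for real symmetric matrices\<close>

lemma sym_mat_quadratic_form_real:
  fixes A :: "real mat" and z :: "complex vec"
  assumes A: "A \<in> carrier_mat n n" "transpose_mat A = A" and z: "z \<in> carrier_vec n"
  shows "Im (\<Sum>i<n. cnj (z $ i) * (map_mat of_real A *\<^sub>v z) $ i) = 0"
proof -
  have sym: "A $$ (i, j) = A $$ (j, i)" if "i < n" "j < n" for i j
    using A that by (metis carrier_matD index_transpose_mat(1))
  let ?a = "\<lambda>i j. A $$ (i, j) * (Re (z $ i) * Im (z $ j))"
  have "(\<Sum>i<n. cnj (z $ i) * (map_mat of_real A *\<^sub>v z) $ i)
      = (\<Sum>i<n. \<Sum>j<n. of_real (A $$ (i, j)) * (cnj (z $ i) * z $ j))"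
    using A z by (auto simp: scalar_prod_def sum_distrib_left ac_simps intro!: sum.cong)
  then have "Im (\<Sum>i<n. cnj (z $ i) * (map_mat of_real A *\<^sub>v z) $ i)
      = (\<Sum>i<n. \<Sum>j<n. ?a i j) - (\<Sum>i<n. \<Sum>j<n. ?a j i)"
    using sym by (simp add: Im_sum algebra_simps sum_subtractf)
  also have "(\<Sum>i<n. \<Sum>j<n. ?a j i) = (\<Sum>i<n. \<Sum>j<n. ?a i j)"
    by (rule sum.swap)
  finally show ?thesis by simp
qed

lemma sym_mat_real_eigenvector:
  fixes A :: "real mat"
  assumes A: "A \<in> carrier_mat n n" "transpose_mat A = A" and n: "n > 0"
  shows "\<exists>e v. v \<in> carrier_vec n \<and> v \<noteq> 0\<^sub>v n \<and> A *\<^sub>v v = e \<cdot>\<^sub>v v"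
proof -
  define Ac where "Ac = map_mat (of_real :: real \<Rightarrow> complex) A"
  have Ac: "Ac \<in> carrier_mat n n" using A unfolding Ac_def by auto
  have cp: "char_poly Ac = map_poly of_real (char_poly A)"
    unfolding Ac_def by (rule of_real_hom.char_poly_hom[OF A(1)])
  have "degree (char_poly Ac) > 0" using degree_monic_char_poly[OF Ac] n by auto
  then obtain lam where lam: "poly (char_poly Ac) lam = 0"
    using fundamental_theorem_of_algebra constant_degree by (metis neq0_conv)
  then have "eigenvalue Ac lam" using eigenvalue_root_char_poly[OF Ac] by auto
  then obtain z where z: "z \<in> carrier_vec n" "z \<noteq> 0\<^sub>v n" "Ac *\<^sub>v z = lam \<cdot>\<^sub>v z"
    unfolding eigenvalue_def eigenvector_def using Ac by auto
  define N where "N = (\<Sum>i<n. (cmod (z $ i))\<^sup>2)"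
  have "N > 0"
  proof -
    obtain i where i: "i < n" "z $ i \<noteq> 0"
      using z(1,2) by (metis eq_vecI index_zero_vec(1,2) carrier_vecD)
    have "(cmod (z $ i))\<^sup>2 \<le> N" unfolding N_def by (rule member_le_sum) (use i in auto)
    moreover have "(cmod (z $ i))\<^sup>2 > 0" using i by auto
    ultimately show ?thesis by linarith
  qed
  have "(\<Sum>i<n. cnj (z $ i) * (Ac *\<^sub>v z) $ i) = (\<Sum>i<n. lam * of_real ((cmod (z $ i))\<^sup>2))"
    using z(1) by (intro sum.cong) (simp_all only: z(3) complex_norm_square mult_ac, auto)
  also have "\<dots> = lam * of_real N" by (simp add: N_def sum_distrib_left)
  finally have "(\<Sum>i<n. cnj (z $ i) * (Ac *\<^sub>v z) $ i) = lam * of_real N" .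
  moreover have "Im (\<Sum>i<n. cnj (z $ i) * (Ac *\<^sub>v z) $ i) = 0"
    unfolding Ac_def by (rule sym_mat_quadratic_form_real[OF A z(1)])
  ultimately have "Im lam = 0" using \<open>N > 0\<close> by simp
  then have "lam = of_real (Re lam)" by (simp add: complex_eq_iff)
  then have "poly (char_poly A) (Re lam) = 0"
    using lam unfolding cp by (metis of_real_0 of_real_eq_iff of_real_hom.poly_map_poly)
  then have "eigenvalue A (Re lam)" using eigenvalue_root_char_poly[OF A(1)] by auto
  then show ?thesis unfolding eigenvalue_def eigenvector_def using A by auto
qed

lemma sym_mat_scalar_prod:
  fixes A :: "real mat"
  assumes "A \<in> carrier_mat n n" "transpose_mat A = A" "x \<in> carrier_vec n" "y \<in> carrier_vec n"
  shows "x \<bullet> (A *\<^sub>v y) = (A *\<^sub>v x) \<bullet> y"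
  using transpose_vec_mult_scalar[of A n n y x] assms by simp

(* An eigenvector of the symmetric matrix R^T A R, where the columns rs of R complete qs to an
   orthonormal basis, lifts to an eigenvector R y of A orthogonal to qs, because A maps the
   span of qs, and hence by symmetry also its complement, into itself. *)
lemma sym_mat_orthogonal_eigenvector:
  fixes A :: "real mat"
  assumes A: "A \<in> carrier_mat n n" "transpose_mat A = A"
    and qs: "orthonormal n qs" "length qs < n"
    and eig: "\<And>q. q \<in> set qs \<Longrightarrow> \<exists>e. A *\<^sub>v q = e \<cdot>\<^sub>v q"
  shows "\<exists>z e. z \<in> carrier_vec n \<and> z \<noteq> 0\<^sub>v n \<and> (\<forall>q\<in>set qs. q \<bullet> z = 0) \<and> A *\<^sub>v z = e \<cdot>\<^sub>v z"
proof -
  obtain rs where bs: "orthonormal n (qs @ rs)" "length (qs @ rs) = n"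
    using orthonormal_extend qs by (metis less_imp_le)
  then have rs: "orthonormal n rs" and qr: "\<And>q r. q \<in> set qs \<Longrightarrow> r \<in> set rs \<Longrightarrow> q \<bullet> r = 0"
    unfolding orthonormal_append by auto
  define m where "m = length rs"
  define R where "R = mat_of_cols n rs"
  have m: "m > 0" using bs(2) qs(2) unfolding m_def length_append by linarith
  have R: "R \<in> carrier_mat n m" unfolding R_def m_def by simp
  have rs_carrier: "\<And>j. j < m \<Longrightarrow> rs ! j \<in> carrier_vec n"
    using rs unfolding orthonormal_def m_def by auto
  have qs_carrier: "\<And>q. q \<in> set qs \<Longrightarrow> q \<in> carrier_vec n"
    using qs unfolding orthonormal_def by auto
  have Rt_index: "(transpose_mat R *\<^sub>v x) $ j = rs ! j \<bullet> x" if "j < m" for j x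
    unfolding R_def transpose_mat_of_cols using that rs_carrier
    by (simp add: mat_of_rows_row m_def)
  have RtR: "transpose_mat R * R = 1\<^sub>m m"
    unfolding R_def m_def by (rule orthonormal_mat_of_cols[OF rs])
  define A' where "A' = transpose_mat R * A * R"
  have A': "A' \<in> carrier_mat m m" unfolding A'_def using R A by auto
  have "transpose_mat A' = A'"
  proof -
    have RtA: "transpose_mat R * A \<in> carrier_mat m n" using R A by auto
    have "transpose_mat A' = transpose_mat R * transpose_mat (transpose_mat R * A)"
      unfolding A'_def by (rule transpose_mult[OF RtA R])
    also have "transpose_mat (transpose_mat R * A) = transpose_mat A * R"
      using transpose_mult[of "transpose_mat R" m n A n] R A by simp
    finally show ?thesis
      unfolding A'_def using A R by (simp add: assoc_mult_mat[of _ m n _ n _ m])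
  qed
  then obtain mu y where y: "y \<in> carrier_vec m" "y \<noteq> 0\<^sub>v m" "A' *\<^sub>v y = mu \<cdot>\<^sub>v y"
    using sym_mat_real_eigenvector[OF A'] m by blast
  define z where "z = R *\<^sub>v y"
  have z: "z \<in> carrier_vec n" unfolding z_def using R y by simp
  have Rtz: "transpose_mat R *\<^sub>v z = y"
    unfolding z_def using R y RtR by (simp add: assoc_mult_mat_vec[symmetric, of _ m n _ m])
  have RtAz: "transpose_mat R *\<^sub>v (A *\<^sub>v z) = mu \<cdot>\<^sub>v y"
    using y(3) R A y unfolding A'_def z_def
    by (simp add: assoc_mult_mat_vec[of _ m n _ n] assoc_mult_mat_vec[of _ n n _ m]
        assoc_mult_mat_vec[of _ m n _ m])
  have qz: "q \<bullet> z = 0" if q: "q \<in> set qs" for q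
  proof -
    have "transpose_mat R *\<^sub>v q = 0\<^sub>v m"
    proof (rule eq_vecI)
      fix j assume "j < dim_vec (0\<^sub>v m)"
      then have j: "j < m" by simp
      have "rs ! j \<bullet> q = 0"
        using qr[OF q, of "rs ! j"] comm_scalar_prod[OF rs_carrier[OF j] qs_carrier[OF q]] j
        unfolding m_def by simp
      then show "(transpose_mat R *\<^sub>v q) $ j = 0\<^sub>v m $ j" unfolding Rt_index[OF j] using j by simp
    qed (use R in simp)
    then show ?thesis
      using transpose_vec_mult_scalar[OF R y(1) qs_carrier[OF q]] y(1) unfolding z_def by simp
  qed
  have "A *\<^sub>v z = mu \<cdot>\<^sub>v z"
  proof (rule orthonormal_basis_eqI[OF bs])
    fix b assume "b \<in> set (qs @ rs)"
    then consider "b \<in> set qs" | j where "j < m" "b = rs ! j"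
      unfolding m_def by (auto simp: in_set_conv_nth)
    then show "b \<bullet> (A *\<^sub>v z) = b \<bullet> (mu \<cdot>\<^sub>v z)"
    proof cases
      case 1
      then obtain e where "A *\<^sub>v b = e \<cdot>\<^sub>v b" using eig by blast
      then show ?thesis
        using 1 qz sym_mat_scalar_prod[OF A qs_carrier[OF 1] z] qs_carrier[OF 1] z by simp
    next
      case 2
      then show ?thesis
        using Rt_index[of j "A *\<^sub>v z"] Rt_index[of j z] RtAz Rtz y(1) z rs_carrier by simp
    qed
  qed (use A z in auto)
  moreover have "z \<noteq> 0\<^sub>v n" using Rtz y(2) R by auto
  ultimately show ?thesis using z qz by blast
qed

lemma sym_mat_orthonormal_eigenvectors:
  fixes A :: "real mat"
  assumes A: "A \<in> carrier_mat n n" "transpose_mat A = A" and "k \<le> n"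
  shows "\<exists>qs. orthonormal n qs \<and> length qs = k \<and> (\<forall>q\<in>set qs. \<exists>e. A *\<^sub>v q = e \<cdot>\<^sub>v q)"
  using \<open>k \<le> n\<close>
proof (induction k)
  case 0
  then show ?case by (auto simp: orthonormal_def)
next
  case (Suc k)
  then obtain qs where qs: "orthonormal n qs" "length qs = k" "\<forall>q\<in>set qs. \<exists>e. A *\<^sub>v q = e \<cdot>\<^sub>v q"
    by auto
  then obtain z e where z: "z \<in> carrier_vec n" "z \<noteq> 0\<^sub>v n" "\<forall>q\<in>set qs. q \<bullet> z = 0"
    and ez: "A *\<^sub>v z = e \<cdot>\<^sub>v z"
    using sym_mat_orthogonal_eigenvector[OF A qs(1)] Suc.prems by (metis Suc_le_lessD)
  define c where "c = 1 / sqrt (z \<bullet> z)"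
  have "A *\<^sub>v (c \<cdot>\<^sub>v z) = e \<cdot>\<^sub>v (c \<cdot>\<^sub>v z)"
    using ez A z by (simp add: mult_mat_vec smult_smult_assoc mult.commute)
  then show ?case
    using orthonormal_snoc[OF qs(1) z] qs unfolding c_def[symmetric]
    by (intro exI[of _ "qs @ [c \<cdot>\<^sub>v z]"]) auto
qed

section \<open>Matrices of the form Q diag(f) Q^T\<close>

definition diag_conj :: "nat \<Rightarrow> real mat \<Rightarrow> (nat \<Rightarrow> real) \<Rightarrow> real mat" where
  "diag_conj n Q f = Q * mat_diag n f * transpose_mat Q"

lemma diag_conj_carrier [simp]: "Q \<in> carrier_mat n n \<Longrightarrow> diag_conj n Q f \<in> carrier_mat n n"
  unfolding diag_conj_def by auto

lemma diag_conj_dim [simp]: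
  "Q \<in> carrier_mat n n \<Longrightarrow> dim_row (diag_conj n Q f) = n"
  "Q \<in> carrier_mat n n \<Longrightarrow> dim_col (diag_conj n Q f) = n"
  unfolding diag_conj_def by auto

lemma diag_conj_index:
  assumes "Q \<in> carrier_mat n n" "i < n" "j < n"
  shows "diag_conj n Q f $$ (i, j) = (\<Sum>k<n. Q $$ (i, k) * f k * Q $$ (j, k))"
  using assms unfolding diag_conj_def mat_diag_mult_right[OF assms(1)]
  by (auto simp: scalar_prod_def lessThan_atLeast0 intro!: sum.cong)

lemma diag_conj_cong:
  assumes "\<And>i. i < n \<Longrightarrow> f i = g i"
  shows "diag_conj n Q f = diag_conj n Q g"
proof -
  have "mat_diag n f = mat_diag n g" by (rule eq_matI) (use assms in \<open>auto simp: mat_diag_def\<close>)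
  then show ?thesis unfolding diag_conj_def by simp
qed

lemma transpose_diag_conj: "Q \<in> carrier_mat n n \<Longrightarrow> transpose_mat (diag_conj n Q f) = diag_conj n Q f"
  by (rule eq_matI) (auto simp: diag_conj_index ac_simps intro!: sum.cong)

lemma diag_conj_const:
  assumes "orthonormal_mat n Q"
  shows "diag_conj n Q (\<lambda>_. c) = c \<cdot>\<^sub>m 1\<^sub>m n"
proof -
  have "mat_diag n (\<lambda>_. c) = c \<cdot>\<^sub>m 1\<^sub>m n" by (rule eq_matI) (auto simp: mat_diag_def)
  then show ?thesis
    using orthonormal_matD[OF assms] unfolding diag_conj_def
    by (simp add: mult_smult_distrib[of _ n n _ n] mult_smult_assoc_mat[of _ n n _ n])
qed

lemma diag_conj_one:
  assumes "orthonormal_mat n Q"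
  shows "diag_conj n Q (\<lambda>_. 1) = 1\<^sub>m n"
  unfolding diag_conj_def mat_diag_one using orthonormal_matD[OF assms] by simp

lemma diag_conj_diff:
  "Q \<in> carrier_mat n n \<Longrightarrow> diag_conj n Q f - diag_conj n Q g = diag_conj n Q (\<lambda>i. f i - g i)"
  by (rule eq_matI) (auto simp: diag_conj_index sum_subtractf[symmetric] algebra_simps)

lemma smult_one_minus_diag_conj:
  "orthonormal_mat n Q \<Longrightarrow> c \<cdot>\<^sub>m 1\<^sub>m n - diag_conj n Q f = diag_conj n Q (\<lambda>i. c - f i)"
  using diag_conj_diff[OF orthonormal_matD(1), of n Q "\<lambda>_. c" f] diag_conj_const[of n Q c] by simp

lemma diag_conj_mult:
  assumes "orthonormal_mat n Q"
  shows "diag_conj n Q f * diag_conj n Q g = diag_conj n Q (\<lambda>i. f i * g i)"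
proof -
  note Q = orthonormal_matD[OF assms]
  let ?D = "mat_diag n f" and ?E = "mat_diag n g" and ?T = "transpose_mat Q"
  have D: "?D \<in> carrier_mat n n" and E: "?E \<in> carrier_mat n n" and T: "?T \<in> carrier_mat n n"
    using Q by auto
  have QD: "Q * ?D \<in> carrier_mat n n" and QE: "Q * ?E \<in> carrier_mat n n"
    and QET: "Q * ?E * ?T \<in> carrier_mat n n"
    using Q D E T by auto
  have "diag_conj n Q f * diag_conj n Q g = (Q * ?D) * (?T * (Q * ?E * ?T))"
    unfolding diag_conj_def by (rule assoc_mult_mat[OF QD T QET])
  also have "?T * (Q * ?E * ?T) = (?T * (Q * ?E)) * ?T"
    by (rule assoc_mult_mat[OF T QE T, symmetric])
  also have "?T * (Q * ?E) = ?E"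
    using assoc_mult_mat[OF T Q(1) E] Q(2) E by simp
  also have "(Q * ?D) * (?E * ?T) = ((Q * ?D) * ?E) * ?T"
    by (rule assoc_mult_mat[OF QD E T, symmetric])
  also have "(Q * ?D) * ?E = Q * (?D * ?E)"
    by (rule assoc_mult_mat[OF Q(1) D E])
  finally show ?thesis unfolding diag_conj_def mat_diag_diag .
qed

lemma minv_eqI:
  fixes M R :: "real mat"
  assumes M: "M \<in> carrier_mat n n" and R: "R \<in> carrier_mat n n" and MR: "M * R = 1\<^sub>m n"
  shows "minv M = R"
proof (cases "mat_inverse M")
  case None
  have "det M * det R = 1" using det_mult[OF M R] MR by simp
  then have "det M \<noteq> 0" by auto
  then show ?thesis
    using det_non_zero_imp_unit[OF M, of undefined] mat_inverse(1)[OF M None, of undefined] by blast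
next
  case (Some R')
  then have R': "R' \<in> carrier_mat n n" "R' * M = 1\<^sub>m n" using mat_inverse(2)[OF M] by auto
  have "R' = R' * (M * R)" using MR R' by simp
  also have "\<dots> = R" using R' M R by (simp add: assoc_mult_mat[symmetric, of _ n n _ n _ n])
  finally show ?thesis unfolding minv_def Some by simp
qed

lemma minv_diag_conj:
  assumes Q: "orthonormal_mat n Q" and f: "\<And>i. i < n \<Longrightarrow> f i \<noteq> 0"
  shows "minv (diag_conj n Q f) = diag_conj n Q (\<lambda>i. 1 / f i)"
proof (rule minv_eqI)
  have "diag_conj n Q f * diag_conj n Q (\<lambda>i. 1 / f i) = diag_conj n Q (\<lambda>_. 1)"
    unfolding diag_conj_mult[OF Q] using f by (intro diag_conj_cong) simp
  then show "diag_conj n Q f * diag_conj n Q (\<lambda>i. 1 / f i) = 1\<^sub>m n"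
    using diag_conj_one[OF Q] by simp
qed (use orthonormal_matD(1)[OF Q] in simp_all)

definition mat_trace :: "real mat \<Rightarrow> real" where
  "mat_trace C = (\<Sum>i<dim_row C. C $$ (i, i))"

lemma mat_trace_diag_conj:
  assumes Q: "orthonormal_mat n Q"
  shows "mat_trace (diag_conj n Q f) = (\<Sum>k<n. f k)"
proof -
  note Q = orthonormal_matD[OF Q]
  have "mat_trace (diag_conj n Q f) = (\<Sum>i<n. \<Sum>k<n. Q $$ (i, k) * f k * Q $$ (i, k))"
    unfolding mat_trace_def using Q(1) by (simp add: diag_conj_index)
  also have "\<dots> = (\<Sum>k<n. \<Sum>i<n. Q $$ (i, k) * f k * Q $$ (i, k))"
    by (rule sum.swap)
  also have "\<dots> = (\<Sum>k<n. f k * (\<Sum>i<n. Q $$ (i, k) * Q $$ (i, k)))"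
    by (simp add: sum_distrib_left ac_simps)
  also have "\<dots> = (\<Sum>k<n. f k)"
  proof (rule sum.cong)
    fix k assume "k \<in> {..<n}"
    then have "(transpose_mat Q * Q) $$ (k, k) = (\<Sum>i<n. Q $$ (i, k) * Q $$ (i, k))"
      using Q(1) by (auto simp: scalar_prod_def lessThan_atLeast0)
    then show "f k * (\<Sum>i<n. Q $$ (i, k) * Q $$ (i, k)) = f k"
      using Q(2) \<open>k \<in> {..<n}\<close> by simp
  qed simp
  finally show ?thesis .
qed

lemma diag_conj_bilinear:
  assumes Q: "Q \<in> carrier_mat n n" and x: "x \<in> carrier_vec n" and y: "y \<in> carrier_vec n"
  shows "x \<bullet> (diag_conj n Q f *\<^sub>v y) = (\<Sum>k<n. f k * (col Q k \<bullet> x) * (col Q k \<bullet> y))"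
proof -
  have col: "col Q k \<bullet> z = (\<Sum>i<n. Q $$ (i, k) * z $ i)" if "z \<in> carrier_vec n" "k < n" for z k
    using Q that by (auto simp: scalar_prod_def lessThan_atLeast0)
  have "x \<bullet> (diag_conj n Q f *\<^sub>v y)
      = (\<Sum>i<n. x $ i * (\<Sum>j<n. (\<Sum>k<n. Q $$ (i, k) * f k * Q $$ (j, k)) * y $ j))"
    using Q x y by (auto simp: scalar_prod_def lessThan_atLeast0 diag_conj_index intro!: sum.cong)
  also have "\<dots> = (\<Sum>i<n. \<Sum>j<n. \<Sum>k<n. f k * (Q $$ (i, k) * x $ i) * (Q $$ (j, k) * y $ j))"
    by (simp add: sum_distrib_left sum_distrib_right ac_simps)
  also have "\<dots> = (\<Sum>i<n. \<Sum>k<n. \<Sum>j<n. f k * (Q $$ (i, k) * x $ i) * (Q $$ (j, k) * y $ j))"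
    by (rule sum.cong[OF refl], rule sum.swap)
  also have "\<dots> = (\<Sum>k<n. \<Sum>i<n. \<Sum>j<n. f k * (Q $$ (i, k) * x $ i) * (Q $$ (j, k) * y $ j))"
    by (rule sum.swap)
  also have "\<dots> = (\<Sum>k<n. f k * (\<Sum>i<n. Q $$ (i, k) * x $ i) * (\<Sum>j<n. Q $$ (j, k) * y $ j))"
    by (simp add: sum_distrib_left sum_distrib_right ac_simps)
  finally show ?thesis using col x y by simp
qed

lemma diag_conj_quadratic_form:
  assumes "Q \<in> carrier_mat n n" "x \<in> carrier_vec n"
  shows "x \<bullet> (diag_conj n Q f *\<^sub>v x) = (\<Sum>k<n. f k * (col Q k \<bullet> x)\<^sup>2)"
  using diag_conj_bilinear[OF assms assms(2)] by (simp add: power2_eq_square mult.assoc)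

lemma orthonormal_mat_parseval:
  assumes "orthonormal_mat n Q" "x \<in> carrier_vec n" "y \<in> carrier_vec n"
  shows "x \<bullet> y = (\<Sum>k<n. (col Q k \<bullet> x) * (col Q k \<bullet> y))"
proof -
  have "x \<bullet> y = x \<bullet> (diag_conj n Q (\<lambda>_. 1) *\<^sub>v y)"
    unfolding diag_conj_one[OF assms(1)] using assms(3) by simp
  also have "\<dots> = (\<Sum>k<n. 1 * (col Q k \<bullet> x) * (col Q k \<bullet> y))"
    using diag_conj_bilinear orthonormal_matD(1) assms by blast
  finally show ?thesis by simp
qed

lemma proots_prod_linear_factors: "proots (\<Prod>a\<leftarrow>xs. [:- a, 1:]) = mset (xs :: real list)"
proof (induction xs)
  case (Cons a xs)
  have "(\<Prod>a\<leftarrow>xs. [:- a, 1:]) \<noteq> (0 :: real poly)" by (auto simp: prod_list_zero_iff)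
  then have "proots (\<Prod>a\<leftarrow>a # xs. [:- a, 1:]) = proots [:- a, 1:] + proots (\<Prod>a\<leftarrow>xs. [:- a, 1:])"
    unfolding list.map prod_list.Cons by (intro proots_mult) auto
  also have "proots [:- a, 1:] = {#a#}" using proots_linear_factor[of "- a"] by simp
  finally show ?case unfolding Cons.IH by simp
qed simp

lemma eigs_diag_conj:
  assumes "orthonormal_mat n Q"
  shows "eigs (diag_conj n Q l) = sort (map l [0..<n])"
proof -
  note Q = orthonormal_matD[OF assms]
  have "similar_mat (diag_conj n Q l) (mat_diag n l)"
    unfolding diag_conj_def by (rule similar_matI[of _ _ Q "transpose_mat Q" n]) (use Q in auto)
  then have "char_poly (diag_conj n Q l) = char_poly (mat_diag n l)" by (rule char_poly_similar)
  also have "\<dots> = (\<Prod>a\<leftarrow>diag_mat (mat_diag n l). [:- a, 1:])"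
    by (rule char_poly_upper_triangular[of _ n]) (auto simp: upper_triangular_def mat_diag_def)
  also have "diag_mat (mat_diag n l) = map l [0..<n]"
    unfolding diag_mat_def mat_diag_def by auto
  finally have "char_poly (diag_conj n Q l) = (\<Prod>a\<leftarrow>map l [0..<n]. [:- a, 1:])" .
  then have "proots (char_poly (diag_conj n Q l)) = mset (map l [0..<n])"
    by (simp only: proots_prod_linear_factors)
  then show ?thesis unfolding eigs_def by (simp only: sorted_list_of_multiset_mset)
qed

section \<open>Eigenvalues of symmetric matrices\<close>

lemma spectral_decomposition:
  fixes A :: "real mat"
  assumes A: "A \<in> carrier_mat n n" "transpose_mat A = A"
  obtains Q l where "orthonormal_mat n Q" "A = diag_conj n Q l"
proof -
  obtain qs where qs: "orthonormal n qs" "length qs = n" "\<forall>q\<in>set qs. \<exists>e. A *\<^sub>v q = e \<cdot>\<^sub>v q"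
    using sym_mat_orthonormal_eigenvectors[OF A order_refl] by blast
  define Q where "Q = mat_of_cols n qs"
  define l where "l i = qs ! i \<bullet> (A *\<^sub>v qs ! i)" for i
  have Q: "orthonormal_mat n Q"
    unfolding Q_def by (rule orthonormal_mat_of_cols_square[OF qs(1,2)])
  have qs_carrier: "qs ! i \<in> carrier_vec n" if "i < n" for i
    using qs that unfolding orthonormal_def by auto
  have eig: "A *\<^sub>v qs ! i = l i \<cdot>\<^sub>v qs ! i" if i: "i < n" for i
  proof -
    obtain e where e: "A *\<^sub>v qs ! i = e \<cdot>\<^sub>v qs ! i" using qs i by (metis nth_mem)
    have "qs ! i \<bullet> qs ! i = 1" using qs i unfolding orthonormal_def by auto
    then have "l i = e" unfolding l_def e using qs_carrier[OF i] by simp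
    then show ?thesis using e by simp
  qed
  have AQ: "A * Q = Q * mat_diag n l"
  proof (rule eq_matI)
    fix i j assume "i < dim_row (Q * mat_diag n l)" "j < dim_col (Q * mat_diag n l)"
    then have i: "i < n" and j: "j < n"
      using Q mat_diag_dim[of n l] unfolding orthonormal_mat_def by auto
    have "(A * Q) $$ (i, j) = (A *\<^sub>v qs ! j) $ i"
      using A i j qs(2) qs_carrier[OF j] unfolding Q_def by (simp add: col_mat_of_cols)
    also have "\<dots> = (Q * mat_diag n l) $$ (i, j)"
      using eig[OF j] i j qs(2) qs_carrier[OF j] mat_diag_mult_right[of Q n n l] Q
      unfolding Q_def orthonormal_mat_def by (simp add: mat_of_cols_def)
    finally show "(A * Q) $$ (i, j) = (Q * mat_diag n l) $$ (i, j)" .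
  qed (use A Q in \<open>auto simp: orthonormal_mat_def mat_diag_def\<close>)
  have "A = A * (Q * transpose_mat Q)" using orthonormal_matD(3)[OF Q] A by simp
  also have "\<dots> = diag_conj n Q l"
    unfolding diag_conj_def AQ[symmetric] using A orthonormal_matD(1)[OF Q]
    by (simp add: assoc_mult_mat[of _ n n _ n _ n])
  finally show ?thesis using that Q by blast
qed

lemma sorted_eigs: "sorted (eigs A)"
  unfolding eigs_def by simp

lemma length_eigs_sym_mat:
  fixes A :: "real mat"
  assumes "A \<in> carrier_mat n n" "transpose_mat A = A"
  shows "length (eigs A) = n"
  using spectral_decomposition[OF assms] eigs_diag_conj
  by (metis diff_zero length_map length_sort length_upt)

lemma eigs_le_lambda_max:
  assumes "i < length (eigs A)"
  shows "eigs A ! i \<le> lambda_max A"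
proof -
  have "eigs A ! i \<le> eigs A ! (length (eigs A) - 1)"
    using assms sorted_eigs[of A] by (intro sorted_nth_mono) auto
  then show ?thesis
    using assms unfolding lambda_max_def by (metis last_conv_nth list.size(3) not_less0)
qed

lemma diag_conj_le_lambda_max:
  assumes "orthonormal_mat n Q" "i < n"
  shows "l i \<le> lambda_max (diag_conj n Q l)"
proof -
  have "l i \<in> set (eigs (diag_conj n Q l))" using assms eigs_diag_conj by simp
  then show ?thesis by (metis eigs_le_lambda_max in_set_conv_nth)
qed

lemma lambda_max_less_of_quadratic_form:
  fixes A :: "real mat"
  assumes A: "A \<in> carrier_mat n n" "transpose_mat A = A" and "n > 0"
    and less: "\<And>p. p \<in> carrier_vec n \<Longrightarrow> p \<noteq> 0\<^sub>v n \<Longrightarrow> p \<bullet> (A *\<^sub>v p) < u * (p \<bullet> p)"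
  shows "lambda_max A < u"
proof -
  obtain Q l where Q: "orthonormal_mat n Q" and Aeq: "A = diag_conj n Q l"
    using spectral_decomposition[OF A] .
  have "eigs A \<noteq> []" using length_eigs_sym_mat[OF A] \<open>n > 0\<close> by auto
  then have "lambda_max A \<in> set (eigs A)" unfolding lambda_max_def by simp
  then obtain j where j: "j < n" and lj: "lambda_max A = l j"
    using eigs_diag_conj[OF Q] unfolding Aeq by auto
  define p where "p = col Q j"
  have p: "p \<in> carrier_vec n" unfolding p_def using j orthonormal_matD(1)[OF Q] by simp
  have colp: "col Q k \<bullet> p = (if k = j then 1 else 0)" if "k < n" for k
    unfolding p_def using orthonormal_mat_col[OF Q that j] .
  have "p \<bullet> p = 1" using colp[OF j] unfolding p_def by simp
  moreover have "p \<bullet> (A *\<^sub>v p) = l j"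
    unfolding Aeq diag_conj_bilinear[OF orthonormal_matD(1)[OF Q] p p] using j
    by (simp add: colp if_distrib[of "\<lambda>x. _ * x * x"] cong: if_cong)
  ultimately show ?thesis using less[OF p] lj by force
qed

(* Courant-Fischer in counting form: otherwise some nonzero z is orthogonal both to the
   eigenvectors of the larger matrix with eigenvalue >= x and to those of the smaller one with
   eigenvalue < x, and then its two Rayleigh quotients are on the wrong sides of x. *)
lemma count_diag_conj_less_antimono:
  assumes Q: "orthonormal_mat n Q" and P: "orthonormal_mat n P"
    and le: "\<And>z. z \<in> carrier_vec n \<Longrightarrow>
      z \<bullet> (diag_conj n Q l *\<^sub>v z) \<le> z \<bullet> (diag_conj n P m *\<^sub>v z)"
  shows "length (filter (\<lambda>i. m i < x) [0..<n]) \<le> length (filter (\<lambda>i. l i < x) [0..<n])"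
proof (rule ccontr)
  assume less: "\<not> ?thesis"
  define cs where "cs = map (col P) (filter (\<lambda>i. \<not> m i < x) [0..<n])
    @ map (col Q) (filter (\<lambda>i. l i < x) [0..<n])"
  have "length (filter (\<lambda>i. m i < x) [0..<n]) + length (filter (\<lambda>i. \<not> m i < x) [0..<n]) = n"
    using sum_length_filter_compl[of "\<lambda>i. m i < x" "[0..<n]"] by simp
  then have "length cs < n" using less unfolding cs_def by simp
  moreover have "set cs \<subseteq> carrier_vec n"
    unfolding cs_def using orthonormal_matD(1)[OF P] orthonormal_matD(1)[OF Q] by auto
  ultimately obtain z where z: "z \<in> carrier_vec n" "z \<noteq> 0\<^sub>v n" and zc: "\<forall>c\<in>set cs. c \<bullet> z = 0"
    using exists_nonzero_orthogonal_vec by blast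
  have P0: "col P i \<bullet> z = 0" if "i < n" "\<not> m i < x" for i using zc that unfolding cs_def by auto
  have Q0: "col Q i \<bullet> z = 0" if "i < n" "l i < x" for i using zc that unfolding cs_def by auto
  have zzP: "z \<bullet> z = (\<Sum>k<n. (col P k \<bullet> z)\<^sup>2)"
    using orthonormal_mat_parseval[OF P z(1) z(1)] by (simp add: power2_eq_square)
  have zzQ: "z \<bullet> z = (\<Sum>k<n. (col Q k \<bullet> z)\<^sup>2)"
    using orthonormal_mat_parseval[OF Q z(1) z(1)] by (simp add: power2_eq_square)
  have "\<exists>k<n. col P k \<bullet> z \<noteq> 0"
  proof (rule ccontr)
    assume "\<not> ?thesis"
    then have "z \<bullet> z = 0" unfolding zzP by simp
    then show False using scalar_prod_self_pos[OF z] by simp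
  qed
  then obtain k where k: "k < n" "col P k \<bullet> z \<noteq> 0" by blast
  have "0 < (\<Sum>i<n. (x - m i) * (col P i \<bullet> z)\<^sup>2)"
  proof (rule sum_pos2)
    show "0 < (x - m k) * (col P k \<bullet> z)\<^sup>2" using k P0[OF k(1)] by (cases "m k < x") auto
  next
    fix i assume "i \<in> {..<n}"
    then show "0 \<le> (x - m i) * (col P i \<bullet> z)\<^sup>2" using P0 by (cases "m i < x") auto
  qed (use k in auto)
  then have "z \<bullet> (diag_conj n P m *\<^sub>v z) < x * (z \<bullet> z)"
    unfolding diag_conj_quadratic_form[OF orthonormal_matD(1)[OF P] z(1)] zzP
    by (simp add: sum_distrib_left left_diff_distrib sum_subtractf)
  moreover have "0 \<le> (\<Sum>i<n. (l i - x) * (col Q i \<bullet> z)\<^sup>2)"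
  proof (rule sum_nonneg)
    fix i assume "i \<in> {..<n}"
    then show "0 \<le> (l i - x) * (col Q i \<bullet> z)\<^sup>2" using Q0 by (cases "l i < x") auto
  qed
  then have "x * (z \<bullet> z) \<le> z \<bullet> (diag_conj n Q l *\<^sub>v z)"
    unfolding diag_conj_quadratic_form[OF orthonormal_matD(1)[OF Q] z(1)] zzQ
    by (simp add: sum_distrib_left left_diff_distrib sum_subtractf)
  ultimately show False using le[OF z(1)] by simp
qed

lemma sorted_nth_le_of_count_less_le:
  fixes xs ys :: "real list"
  assumes sorted: "sorted xs" "sorted ys" and len: "length xs = length ys"
    and count: "\<And>x. length (filter (\<lambda>y. y < x) ys) \<le> length (filter (\<lambda>y. y < x) xs)"
    and k: "k < length xs"
  shows "xs ! k \<le> ys ! k"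
proof (rule ccontr)
  assume "\<not> ?thesis"
  then have less: "ys ! k < xs ! k" by simp
  have "{0..k} \<subseteq> {i. i < length ys \<and> ys ! i < xs ! k}"
    using sorted(2) k len less by (auto intro: le_less_trans[OF sorted_nth_mono])
  then have "card {0..k} \<le> card {i. i < length ys \<and> ys ! i < xs ! k}"
    by (intro card_mono) auto
  then have "Suc k \<le> length (filter (\<lambda>y. y < xs ! k) ys)"
    by (simp add: length_filter_conv_card)
  moreover have "{i. i < length xs \<and> xs ! i < xs ! k} \<subseteq> {0..<k}"
  proof
    fix i assume i: "i \<in> {i. i < length xs \<and> xs ! i < xs ! k}"
    show "i \<in> {0..<k}"
    proof (rule ccontr)
      assume "i \<notin> {0..<k}"
      then have "xs ! k \<le> xs ! i" using sorted(1) i by (intro sorted_nth_mono) auto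
      then show False using i by simp
    qed
  qed
  then have "card {i. i < length xs \<and> xs ! i < xs ! k} \<le> card {0..<k}"
    by (intro card_mono) auto
  then have "length (filter (\<lambda>y. y < xs ! k) xs) \<le> k"
    by (simp add: length_filter_conv_card)
  ultimately show False using count[of "xs ! k"] by simp
qed

lemma eigs_mono:
  fixes A B :: "real mat"
  assumes A: "A \<in> carrier_mat n n" "transpose_mat A = A"
    and B: "B \<in> carrier_mat n n" "transpose_mat B = B"
    and le: "\<And>z. z \<in> carrier_vec n \<Longrightarrow> z \<bullet> (A *\<^sub>v z) \<le> z \<bullet> (B *\<^sub>v z)"
    and k: "k < n"
  shows "eigs A ! k \<le> eigs B ! k"
proof -
  obtain Q l where Q: "orthonormal_mat n Q" and Aeq: "A = diag_conj n Q l"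
    using spectral_decomposition[OF A] .
  obtain P m where P: "orthonormal_mat n P" and Beq: "B = diag_conj n P m"
    using spectral_decomposition[OF B] .
  have "length (filter (\<lambda>y. y < x) (eigs B)) \<le> length (filter (\<lambda>y. y < x) (eigs A))" for x
    using count_diag_conj_less_antimono[OF Q P le[unfolded Aeq Beq], of x]
    unfolding Aeq Beq eigs_diag_conj[OF Q] eigs_diag_conj[OF P] filter_sort
    by (simp add: comp_def)
  then show ?thesis
    using sorted_nth_le_of_count_less_le[OF sorted_eigs sorted_eigs] k
      length_eigs_sym_mat[OF A] length_eigs_sym_mat[OF B] by simp
qed

section \<open>Rank-one updates and resolvents\<close>

definition outer_mat :: "nat \<Rightarrow> real vec \<Rightarrow> real vec \<Rightarrow> real mat" where
  "outer_mat n a b = mat n n (\<lambda>(i, j). a $ i * b $ j)"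

lemma outer_mat_carrier [simp]: "outer_mat n a b \<in> carrier_mat n n"
  and outer_mat_dim [simp]: "dim_row (outer_mat n a b) = n" "dim_col (outer_mat n a b) = n"
  unfolding outer_mat_def by simp_all

lemma smult_mat_mult_vec:
  "A \<in> carrier_mat n m \<Longrightarrow> x \<in> carrier_vec m \<Longrightarrow> (k \<cdot>\<^sub>m A) *\<^sub>v x = k \<cdot>\<^sub>v (A *\<^sub>v x)"
  by (rule eq_vecI) (auto simp: scalar_prod_def sum_distrib_left ac_simps)

lemma outer_mat_mult_vec:
  assumes "a \<in> carrier_vec n" "b \<in> carrier_vec n" "x \<in> carrier_vec n"
  shows "outer_mat n a b *\<^sub>v x = (b \<bullet> x) \<cdot>\<^sub>v a"
  by (rule eq_vecI)
    (use assms in \<open>auto simp: outer_mat_def scalar_prod_def sum_distrib_left ac_simps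
      intro!: sum.cong\<close>)

lemma frob_outer_mat:
  assumes "C \<in> carrier_mat n n" "v \<in> carrier_vec n"
  shows "frob C (outer_mat n v v) = v \<bullet> (C *\<^sub>v v)"
  unfolding frob_def outer_mat_def using assms
  by (auto simp: scalar_prod_def lessThan_atLeast0 sum_distrib_left ac_simps intro!: sum.cong)

lemma mat_trace_add_outer_mat:
  assumes "R \<in> carrier_mat n n" "w \<in> carrier_vec n"
  shows "mat_trace (R + c \<cdot>\<^sub>m outer_mat n w w) = mat_trace R + c * (w \<bullet> w)"
  unfolding mat_trace_def using assms
  by (auto simp: outer_mat_def scalar_prod_def lessThan_atLeast0 sum.distrib sum_distrib_left)

lemma quadratic_form_add_outer_mat:
  assumes "A \<in> carrier_mat n n" "v \<in> carrier_vec n" "z \<in> carrier_vec n"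
  shows "z \<bullet> ((A + t \<cdot>\<^sub>m outer_mat n v v) *\<^sub>v z) = z \<bullet> (A *\<^sub>v z) + t * (v \<bullet> z)\<^sup>2"
proof -
  have "(A + t \<cdot>\<^sub>m outer_mat n v v) *\<^sub>v z = A *\<^sub>v z + t \<cdot>\<^sub>v ((v \<bullet> z) \<cdot>\<^sub>v v)"
    using assms
    by (simp add: add_mult_distrib_mat_vec[of _ n n] smult_mat_mult_vec[of _ n n]
        outer_mat_mult_vec)
  then show ?thesis
    using assms comm_scalar_prod[of z n v]
    by (simp add: scalar_prod_add_distrib[of _ n] scalar_prod_smult_right power2_eq_square)
qed

lemma transpose_add_outer_mat:
  assumes "A \<in> carrier_mat n n" "transpose_mat A = A"
  shows "transpose_mat (A + t \<cdot>\<^sub>m outer_mat n v v) = A + t \<cdot>\<^sub>m outer_mat n v v"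
proof (rule eq_matI)
  fix i j assume "i < dim_row (A + t \<cdot>\<^sub>m outer_mat n v v)" "j < dim_col (A + t \<cdot>\<^sub>m outer_mat n v v)"
  moreover have "A $$ (j, i) = A $$ (i, j)" if "i < n" "j < n"
    using assms that by (metis carrier_matD index_transpose_mat(1))
  ultimately show "transpose_mat (A + t \<cdot>\<^sub>m outer_mat n v v) $$ (i, j)
      = (A + t \<cdot>\<^sub>m outer_mat n v v) $$ (i, j)"
    using assms(1) by (auto simp: outer_mat_def)
qed (use assms in auto)

lemma frob_square_add_outer_mat:
  fixes R :: "real mat"
  assumes R: "R \<in> carrier_mat n n" "transpose_mat R = R" and v: "v \<in> carrier_vec n"
  shows "frob (c \<cdot>\<^sub>m (R * R) + R) (outer_mat n v v) = c * ((R *\<^sub>v v) \<bullet> (R *\<^sub>v v)) + v \<bullet> (R *\<^sub>v v)"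
proof -
  have "v \<bullet> ((R * R) *\<^sub>v v) = (R *\<^sub>v v) \<bullet> (R *\<^sub>v v)"
    using sym_mat_scalar_prod[OF R v, of "R *\<^sub>v v"] R v
    by (simp add: assoc_mult_mat_vec[of _ n n _ n])
  then show ?thesis
    using R v
    by (simp add: frob_outer_mat[of _ n] add_mult_distrib_mat_vec[of _ n n]
        smult_mat_mult_vec[of _ n n] scalar_prod_add_distrib[of _ n] scalar_prod_smult_right)
qed

lemma sherman_morrison:
  fixes M R :: "real mat"
  assumes M: "M \<in> carrier_mat n n" and R: "R \<in> carrier_mat n n" and MR: "M * R = 1\<^sub>m n"
    and Rsym: "transpose_mat R = R" and v: "v \<in> carrier_vec n"
    and s: "s = v \<bullet> (R *\<^sub>v v)" and ts: "1 - t * s \<noteq> 0"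
  shows "(M - t \<cdot>\<^sub>m outer_mat n v v) * (R + (t / (1 - t * s)) \<cdot>\<^sub>m outer_mat n (R *\<^sub>v v) (R *\<^sub>v v))
    = 1\<^sub>m n"
proof (rule eq_matI)
  define w where "w = R *\<^sub>v v"
  define c where "c = t / (1 - t * s)"
  have w: "w \<in> carrier_vec n" unfolding w_def using R v by simp
  fix i j assume "i < dim_row (1\<^sub>m n)" "j < dim_col (1\<^sub>m n)"
  then have i: "i < n" and j: "j < n" by auto
  have MR_ij: "(\<Sum>k<n. M $$ (i, k) * R $$ (k, j)) = (if i = j then 1 else 0)"
    using arg_cong[OF MR, of "\<lambda>X. X $$ (i, j)"] M R i j
    by (auto simp: scalar_prod_def lessThan_atLeast0)
  have "M *\<^sub>v w = v"
    unfolding w_def using M R v MR by (simp add: assoc_mult_mat_vec[symmetric, of _ n n _ n])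
  then have Mw: "(\<Sum>k<n. M $$ (i, k) * w $ k) = v $ i"
    using M i w
    by (auto simp: scalar_prod_def lessThan_atLeast0 dest!: arg_cong[of _ _ "\<lambda>x. x $ i"])
  have "transpose_mat R *\<^sub>v v = w" unfolding w_def Rsym ..
  then have vR: "(\<Sum>k<n. v $ k * R $$ (k, j)) = w $ j"
    using R j v
    by (auto simp: scalar_prod_def lessThan_atLeast0 ac_simps dest!: arg_cong[of _ _ "\<lambda>x. x $ j"])
  have vw: "(\<Sum>k<n. v $ k * w $ k) = s"
    unfolding s w_def[symmetric] using w by (simp add: scalar_prod_def lessThan_atLeast0)
  have "((M - t \<cdot>\<^sub>m outer_mat n v v) * (R + c \<cdot>\<^sub>m outer_mat n w w)) $$ (i, j)
      = (\<Sum>k<n. (M $$ (i, k) - t * (v $ i * v $ k)) * (R $$ (k, j) + c * (w $ k * w $ j)))"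
    using M R i j by (auto simp: scalar_prod_def lessThan_atLeast0 outer_mat_def)
  also have "\<dots> = (\<Sum>k<n. M $$ (i, k) * R $$ (k, j)) + c * w $ j * (\<Sum>k<n. M $$ (i, k) * w $ k)
      - t * v $ i * (\<Sum>k<n. v $ k * R $$ (k, j)) - t * c * v $ i * w $ j * (\<Sum>k<n. v $ k * w $ k)"
    by (simp add: algebra_simps sum.distrib sum_subtractf sum_distrib_left)
  also have "\<dots> = (if i = j then 1 else 0) + v $ i * w $ j * (c * (1 - t * s) - t)"
    unfolding MR_ij Mw vR vw by (simp add: algebra_simps)
  also have "c * (1 - t * s) - t = 0" unfolding c_def using ts by simp
  finally show "((M - t \<cdot>\<^sub>m outer_mat n v v) *
      (R + (t / (1 - t * s)) \<cdot>\<^sub>m outer_mat n (R *\<^sub>v v) (R *\<^sub>v v))) $$ (i, j) = 1\<^sub>m n $$ (i, j)"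
    using i j unfolding c_def w_def by simp
qed (use M R in auto)

lemma rank_one_below_weighted_squares:
  fixes c a w :: "nat \<Rightarrow> real"
  assumes c: "\<And>k. k < n \<Longrightarrow> c k > 0" and w: "\<exists>k<n. w k \<noteq> 0" and t: "t \<ge> 0"
    and ts: "t * (\<Sum>k<n. (a k)\<^sup>2 / c k) < 1"
  shows "t * (\<Sum>k<n. a k * w k)\<^sup>2 < (\<Sum>k<n. c k * (w k)\<^sup>2)"
proof -
  define X where "X = (\<Sum>k<n. a k * w k)"
  define S where "S = (\<Sum>k<n. (a k)\<^sup>2 / c k)"
  define C where "C = (\<Sum>k<n. c k * (w k)\<^sup>2)"
  have "C > 0"
  proof -
    obtain k where k: "k < n" "w k \<noteq> 0" using w by blast
    have "0 \<le> c i * (w i)\<^sup>2" if "i < n" for i using c[OF that] by simp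
    then show ?thesis unfolding C_def
      by (intro sum_pos2[of _ k]) (use k c in auto)
  qed
  have square: "2 * \<alpha> * X - \<alpha>\<^sup>2 * S \<le> C" for \<alpha>
  proof -
    have "0 \<le> (\<Sum>k<n. c k * (w k - \<alpha> * a k / c k)\<^sup>2)"
    proof (rule sum_nonneg)
      fix k assume "k \<in> {..<n}"
      then show "0 \<le> c k * (w k - \<alpha> * a k / c k)\<^sup>2" using c[of k] by simp
    qed
    also have "\<dots> = (\<Sum>k<n. c k * (w k)\<^sup>2 - 2 * \<alpha> * (a k * w k) + \<alpha>\<^sup>2 * ((a k)\<^sup>2 / c k))"
    proof (rule sum.cong)
      fix k assume "k \<in> {..<n}"
      then have "c k \<noteq> 0" using c[of k] by simp
      then show "c k * (w k - \<alpha> * a k / c k)\<^sup>2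
          = c k * (w k)\<^sup>2 - 2 * \<alpha> * (a k * w k) + \<alpha>\<^sup>2 * ((a k)\<^sup>2 / c k)"
        by (simp add: field_simps power2_eq_square)
    qed simp
    also have "\<dots> = C - (2 * \<alpha> * X - \<alpha>\<^sup>2 * S)"
      unfolding C_def X_def S_def by (simp add: sum.distrib sum_subtractf sum_distrib_left)
    finally show ?thesis by simp
  qed
  have "2 * (t * X) * X - (t * X)\<^sup>2 * S = t * X\<^sup>2 + t * X\<^sup>2 * (1 - t * S)"
    by (simp add: algebra_simps power2_eq_square)
  then have le: "t * X\<^sup>2 + t * X\<^sup>2 * (1 - t * S) \<le> C" using square[of "t * X"] by simp
  show ?thesis
  proof (cases "t * X\<^sup>2 = 0")
    case False
    then have "0 < t * X\<^sup>2" using t by (simp add: less_le)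
    moreover have "0 < 1 - t * S" using ts unfolding S_def by simp
    ultimately show ?thesis using le unfolding X_def C_def
      by (smt (verit) mult_pos_pos)
  qed (use \<open>C > 0\<close> in \<open>auto simp: X_def C_def\<close>)
qed

definition resolvent :: "nat \<Rightarrow> real \<Rightarrow> real mat \<Rightarrow> real mat" where
  "resolvent n u A = minv (u \<cdot>\<^sub>m 1\<^sub>m n - A)"

lemma resolvent_diag_conj:
  assumes Q: "orthonormal_mat n Q" and l: "\<And>i. i < n \<Longrightarrow> l i < u"
  shows "resolvent n u (diag_conj n Q l) = diag_conj n Q (\<lambda>i. 1 / (u - l i))"
  unfolding resolvent_def smult_one_minus_diag_conj[OF Q]
  by (rule minv_diag_conj[OF Q]) (use l in force)

lemma spectral_decomposition_below:
  fixes A :: "real mat"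
  assumes A: "A \<in> carrier_mat n n" "transpose_mat A = A" and u: "lambda_max A < u"
  obtains Q l where "orthonormal_mat n Q" "A = diag_conj n Q l" "\<And>i. i < n \<Longrightarrow> l i < u"
    "resolvent n u A = diag_conj n Q (\<lambda>i. 1 / (u - l i))"
proof -
  obtain Q l where Q: "orthonormal_mat n Q" and Aeq: "A = diag_conj n Q l"
    using spectral_decomposition[OF A] .
  then have l: "l i < u" if "i < n" for i
    using diag_conj_le_lambda_max[OF Q that, of l] u by simp
  then have "resolvent n u A = diag_conj n Q (\<lambda>i. 1 / (u - l i))"
    unfolding Aeq using resolvent_diag_conj[OF Q, of l u] by blast
  with that Q Aeq l show ?thesis by blast
qed

lemma resolvent_sym_mat:
  fixes A :: "real mat"
  assumes A: "A \<in> carrier_mat n n" "transpose_mat A = A" and u: "lambda_max A < u"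
  shows "resolvent n u A \<in> carrier_mat n n" "transpose_mat (resolvent n u A) = resolvent n u A"
    and "(u \<cdot>\<^sub>m 1\<^sub>m n - A) * resolvent n u A = 1\<^sub>m n"
proof -
  obtain Q l where Q: "orthonormal_mat n Q" and Aeq: "A = diag_conj n Q l"
    and l: "\<And>i. i < n \<Longrightarrow> l i < u" and R: "resolvent n u A = diag_conj n Q (\<lambda>i. 1 / (u - l i))"
    using spectral_decomposition_below[OF A u] by blast
  show "resolvent n u A \<in> carrier_mat n n" "transpose_mat (resolvent n u A) = resolvent n u A"
    unfolding R using orthonormal_matD(1)[OF Q] by (simp_all add: transpose_diag_conj)
  have "diag_conj n Q (\<lambda>i. u - l i) * diag_conj n Q (\<lambda>i. 1 / (u - l i)) = diag_conj n Q (\<lambda>_. 1)"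
    unfolding diag_conj_mult[OF Q] using l by (intro diag_conj_cong) force
  then show "(u \<cdot>\<^sub>m 1\<^sub>m n - A) * resolvent n u A = 1\<^sub>m n"
    unfolding R unfolding Aeq smult_one_minus_diag_conj[OF Q] diag_conj_one[OF Q] .
qed

lemma sum_nth_sort:
  "(\<Sum>i<length xs. f (sort xs ! i)) = (\<Sum>i<length xs. f ((xs :: real list) ! i))"
proof -
  have "(\<Sum>i<length xs. f (sort xs ! i)) = sum_list (map f (sort xs))"
    by (simp add: sum_list_sum_nth lessThan_atLeast0)
  also have "\<dots> = sum_list (map f xs)" by (metis mset_map mset_sort sum_mset_sum_list)
  also have "\<dots> = (\<Sum>i<length xs. f (xs ! i))" by (simp add: sum_list_sum_nth lessThan_atLeast0)
  finally show ?thesis .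
qed

lemma mat_trace_resolvent:
  fixes A :: "real mat"
  assumes A: "A \<in> carrier_mat n n" "transpose_mat A = A" and u: "lambda_max A < u"
  shows "mat_trace (resolvent n u A) = (\<Sum>i<n. 1 / (u - eigs A ! i))"
proof -
  obtain Q l where Q: "orthonormal_mat n Q" and Aeq: "A = diag_conj n Q l"
    and l: "\<And>i. i < n \<Longrightarrow> l i < u" and R: "resolvent n u A = diag_conj n Q (\<lambda>i. 1 / (u - l i))"
    using spectral_decomposition_below[OF A u] by blast
  have "mat_trace (resolvent n u A) = (\<Sum>i<n. 1 / (u - l i))"
    unfolding R mat_trace_diag_conj[OF Q] ..
  also have "\<dots> = (\<Sum>i<n. 1 / (u - eigs A ! i))"
    using sum_nth_sort[where xs = "map l [0..<n]" and f = "\<lambda>x. 1 / (u - x)"]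
    unfolding Aeq eigs_diag_conj[OF Q] by simp
  finally show ?thesis .
qed

lemma lambda_max_rank_one_update_less:
  fixes A :: "real mat"
  assumes A: "A \<in> carrier_mat n n" "transpose_mat A = A" and n: "n > 0" and u: "lambda_max A < u"
    and v: "v \<in> carrier_vec n" and t: "0 \<le> t" and ts: "t * (v \<bullet> (resolvent n u A *\<^sub>v v)) < 1"
  shows "lambda_max (A + t \<cdot>\<^sub>m outer_mat n v v) < u"
proof -
  obtain Q l where Q: "orthonormal_mat n Q" and Aeq: "A = diag_conj n Q l"
    and l: "\<And>i. i < n \<Longrightarrow> l i < u" and R: "resolvent n u A = diag_conj n Q (\<lambda>i. 1 / (u - l i))"
    using spectral_decomposition_below[OF A u] by blast
  note Qc = orthonormal_matD(1)[OF Q]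
  define a where "a k = col Q k \<bullet> v" for k
  have s: "v \<bullet> (resolvent n u A *\<^sub>v v) = (\<Sum>k<n. (a k)\<^sup>2 / (u - l k))"
    unfolding R diag_conj_quadratic_form[OF Qc v] a_def by simp
  have B: "A + t \<cdot>\<^sub>m outer_mat n v v \<in> carrier_mat n n"
    "transpose_mat (A + t \<cdot>\<^sub>m outer_mat n v v) = A + t \<cdot>\<^sub>m outer_mat n v v"
    using A transpose_add_outer_mat[OF A] by auto
  show ?thesis
  proof (rule lambda_max_less_of_quadratic_form[OF B n])
    fix p :: "real vec" assume p: "p \<in> carrier_vec n" "p \<noteq> 0\<^sub>v n"
    define w where "w k = col Q k \<bullet> p" for k
    have pp: "p \<bullet> p = (\<Sum>k<n. (w k)\<^sup>2)"
      using orthonormal_mat_parseval[OF Q p(1) p(1)] unfolding w_def by (simp add: power2_eq_square)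
    have "\<exists>k<n. w k \<noteq> 0"
    proof (rule ccontr)
      assume "\<not> ?thesis"
      then have "p \<bullet> p = 0" unfolding pp by simp
      then show False using scalar_prod_self_pos[OF p] by simp
    qed
    then have "t * (\<Sum>k<n. a k * w k)\<^sup>2 < (\<Sum>k<n. (u - l k) * (w k)\<^sup>2)"
      using l ts unfolding s by (intro rank_one_below_weighted_squares t) auto
    also have "\<dots> = u * (p \<bullet> p) - p \<bullet> (A *\<^sub>v p)"
      unfolding pp Aeq diag_conj_quadratic_form[OF Qc p(1)] w_def
      by (simp add: left_diff_distrib sum_subtractf sum_distrib_left)
    finally show "p \<bullet> ((A + t \<cdot>\<^sub>m outer_mat n v v) *\<^sub>v p) < u * (p \<bullet> p)"
      using quadratic_form_add_outer_mat[OF A(1) v p(1), of t]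
        orthonormal_mat_parseval[OF Q v p(1)] unfolding a_def w_def by simp
  qed
qed

lemma mat_trace_resolvent_rank_one_update:
  fixes A :: "real mat"
  assumes A: "A \<in> carrier_mat n n" "transpose_mat A = A" and u: "lambda_max A < u"
    and v: "v \<in> carrier_vec n" and R: "R = resolvent n u A" and ts: "t * (v \<bullet> (R *\<^sub>v v)) \<noteq> 1"
  shows "mat_trace (resolvent n u (A + t \<cdot>\<^sub>m outer_mat n v v))
    = mat_trace R + t / (1 - t * (v \<bullet> (R *\<^sub>v v))) * ((R *\<^sub>v v) \<bullet> (R *\<^sub>v v))"
proof -
  note R_props = resolvent_sym_mat[OF A u, folded R]
  define c where "c = t / (1 - t * (v \<bullet> (R *\<^sub>v v)))"
  have M: "u \<cdot>\<^sub>m 1\<^sub>m n - A \<in> carrier_mat n n" by (rule minus_carrier_mat[OF A(1)])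
  have "u \<cdot>\<^sub>m 1\<^sub>m n - (A + t \<cdot>\<^sub>m outer_mat n v v) = (u \<cdot>\<^sub>m 1\<^sub>m n - A) - t \<cdot>\<^sub>m outer_mat n v v"
    by (rule eq_matI) (use A in auto)
  then have "(u \<cdot>\<^sub>m 1\<^sub>m n - (A + t \<cdot>\<^sub>m outer_mat n v v))
      * (R + c \<cdot>\<^sub>m outer_mat n (R *\<^sub>v v) (R *\<^sub>v v)) = 1\<^sub>m n"
    unfolding c_def using sherman_morrison[OF M R_props(1,3,2) v refl] ts by simp
  then have "resolvent n u (A + t \<cdot>\<^sub>m outer_mat n v v) = R + c \<cdot>\<^sub>m outer_mat n (R *\<^sub>v v) (R *\<^sub>v v)"
    unfolding resolvent_def by (rule minv_eqI[rotated 2]) (use A R_props in auto)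
  then show ?thesis
    unfolding c_def using mat_trace_add_outer_mat[OF R_props(1)] R_props(1) v by simp
qed

section \<open>The upper potential\<close>

lemma upper_potential_eq_sum:
  "A \<in> carrier_mat n n \<Longrightarrow> upper_potential T u A = (\<Sum>i\<in>{n - T..<n}. 1 / (u - eigs A ! i))"
  unfolding upper_potential_def by simp

lemma upper_potential_strict_antimono:
  fixes A :: "real mat"
  assumes A: "A \<in> carrier_mat n n" "transpose_mat A = A" and T: "1 \<le> T" "T \<le> n"
    and u: "lambda_max A < u" and "u < u'"
  shows "upper_potential T u' A < upper_potential T u A"
  unfolding upper_potential_eq_sum[OF A(1)]
proof (rule sum_strict_mono)
  fix i assume "i \<in> {n - T..<n}"
  then have "eigs A ! i < u"
    using eigs_le_lambda_max[of i A] length_eigs_sym_mat[OF A] u by simp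
  then show "1 / (u' - eigs A ! i) < 1 / (u - eigs A ! i)"
    using \<open>u < u'\<close> by (simp add: frac_less2)
qed (use T in auto)

lemma upper_potential_le_of_eigs_le:
  fixes A B :: "real mat"
  assumes A: "A \<in> carrier_mat n n" and B: "B \<in> carrier_mat n n" and T: "T \<le> n"
    and le: "\<And>i. i < n \<Longrightarrow> eigs A ! i \<le> eigs B ! i"
    and below: "\<And>i. i < n \<Longrightarrow> eigs B ! i < u"
    and total: "(\<Sum>i<n. 1 / (u - eigs B ! i)) \<le> (\<Sum>i<n. 1 / (u - eigs A ! i)) + \<delta>"
  shows "upper_potential T u B \<le> upper_potential T u A + \<delta>"
proof -
  have split: "(\<Sum>i<n. f i) = (\<Sum>i\<in>{0..<n - T}. f i) + (\<Sum>i\<in>{n - T..<n}. f i)" for f :: "nat \<Rightarrow> real"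
    by (simp add: lessThan_atLeast0 sum.atLeastLessThan_concat)
  have "(\<Sum>i\<in>{0..<n - T}. 1 / (u - eigs A ! i)) \<le> (\<Sum>i\<in>{0..<n - T}. 1 / (u - eigs B ! i))"
    using le below by (intro sum_mono frac_le) (auto intro: add_le_imp_le_diff)
  then show ?thesis
    using total split[of "\<lambda>i. 1 / (u - eigs A ! i)"] split[of "\<lambda>i. 1 / (u - eigs B ! i)"]
    unfolding upper_potential_eq_sum[OF A] upper_potential_eq_sum[OF B] by linarith
qed

lemma upper_potential_rank_one_update:
  fixes A :: "real mat"
  assumes A: "A \<in> carrier_mat n n" "transpose_mat A = A" and T: "1 \<le> T" "T \<le> n"
    and u: "lambda_max A < u" and v: "v \<in> carrier_vec n" and t: "0 \<le> t"
    and R: "R = resolvent n u A" and ts: "t * (v \<bullet> (R *\<^sub>v v)) < 1"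
  shows "lambda_max (A + t \<cdot>\<^sub>m outer_mat n v v) < u"
    and "upper_potential T u (A + t \<cdot>\<^sub>m outer_mat n v v)
      \<le> upper_potential T u A + t / (1 - t * (v \<bullet> (R *\<^sub>v v))) * ((R *\<^sub>v v) \<bullet> (R *\<^sub>v v))"
proof -
  let ?B = "A + t \<cdot>\<^sub>m outer_mat n v v"
  have B: "?B \<in> carrier_mat n n" "transpose_mat ?B = ?B"
    using A transpose_add_outer_mat[OF A] by auto
  show uB: "lambda_max ?B < u"
    using lambda_max_rank_one_update_less[OF A _ u v t] ts T R by simp
  have le: "eigs A ! i \<le> eigs ?B ! i" if "i < n" for i
    using quadratic_form_add_outer_mat[OF A(1) v] t
    by (intro eigs_mono[OF A B _ that]) simp
  have below: "eigs ?B ! i < u" if "i < n" for i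
    using eigs_le_lambda_max[of i ?B] length_eigs_sym_mat[OF B] uB that by simp
  show "upper_potential T u ?B
      \<le> upper_potential T u A + t / (1 - t * (v \<bullet> (R *\<^sub>v v))) * ((R *\<^sub>v v) \<bullet> (R *\<^sub>v v))"
    using upper_potential_le_of_eigs_le[OF A(1) B(1) T(2) le below]
      mat_trace_resolvent_rank_one_update[OF A u v R] mat_trace_resolvent[OF A u]
      mat_trace_resolvent[OF B uB] ts R by simp
qed

theorem lemma3p10:
  fixes n T :: nat and A :: "real mat" and u \<delta>U t :: real and v :: "real vec"
  assumes "A \<in> carrier_mat n n" and "transpose_mat A = A"
    and "1 \<le> T" and "T \<le> n"
    and "u > lambda_max A" and "\<delta>U > 0" and "t > 0"
    and "v \<in> carrier_vec n"
    and "Y = mat n n (\<lambda>(i,j). v $ i * v $ j)"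
    and "UA = (1 / (upper_potential T u A - upper_potential T (u + \<delta>U) A))
                \<cdot>\<^sub>m (minv ((u + \<delta>U) \<cdot>\<^sub>m 1\<^sub>m n - A) * minv ((u + \<delta>U) \<cdot>\<^sub>m 1\<^sub>m n - A))
              + minv ((u + \<delta>U) \<cdot>\<^sub>m 1\<^sub>m n - A)"
    and "frob UA Y \<le> 1 / t"
  shows "upper_potential T (u + \<delta>U) (A + t \<cdot>\<^sub>m Y) \<le> upper_potential T u A
         \<and> lambda_max (A + t \<cdot>\<^sub>m Y) < u + \<delta>U"
proof -
  note A = assms(1,2) and T = assms(3,4) and v = assms(8)
  define R where "R = resolvent n (u + \<delta>U) A"
  define D where "D = upper_potential T u A - upper_potential T (u + \<delta>U) A"
  define s where "s = v \<bullet> (R *\<^sub>v v)"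
  define r where "r = (R *\<^sub>v v) \<bullet> (R *\<^sub>v v)"
  have u': "lambda_max A < u + \<delta>U" using assms(5,6) by simp
  have "D > 0"
    unfolding D_def using upper_potential_strict_antimono[OF A T assms(5)] assms(6) by simp
  note R_props = resolvent_sym_mat[OF A u', folded R_def]
  have "frob UA Y = r / D + s"
    using frob_square_add_outer_mat[OF R_props(1,2) v, of "1 / D"] assms(9,10)
    unfolding R_def D_def r_def s_def resolvent_def outer_mat_def by simp
  then have "t * (r / D + s) \<le> t * (1 / t)"
    using assms(7,11) by (intro mult_left_mono) auto
  then have budget: "t * r / D + t * s \<le> 1" using assms(7) by (simp add: algebra_simps)
  have "t * s < 1"
  proof (cases "R *\<^sub>v v = 0\<^sub>v n")
    case True
    then show ?thesis unfolding s_def using v by simp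
  next
    case False
    then have "r > 0"
      unfolding r_def using scalar_prod_self_pos[OF mult_mat_vec_carrier[OF R_props(1) v]] by simp
    then have "t * r / D > 0" using \<open>D > 0\<close> assms(7) by simp
    then show ?thesis using budget by linarith
  qed
  moreover have "t / (1 - t * s) * r \<le> D"
    using budget \<open>D > 0\<close> \<open>t * s < 1\<close> by (simp add: field_simps)
  ultimately show ?thesis
    using upper_potential_rank_one_update[OF A T u' v _ R_def, of t] assms(7,9)
    unfolding D_def r_def s_def outer_mat_def by simp
qed

end
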